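(* Let $\rho$ be a worst-case risk measure that uses an uncertainty set $\mathcal{U}\subseteq\mathbb{R}^K$ such that $\mathcal{U}\subseteq\mathcal{A}(\mathcal{U})$. Then $\rho$ satisfies the bounded conditional market risk property.
   Context: Returns $r\in\mathbb{R}^K$ with natural filtration $\mathcal{F}_k=\sigma(r_1,\dots,r_k)$; investment amounts $\zeta_\ell$ are $\mathcal{F}_\ell$-measurable functions of $r_{1:\ell}$. The worst-case risk measure with uncertainty set $\mathcal{U}$ is $\rho=\rho_0\circ\cdots\circ\rho_{K-1}$ where $\rho_k(X,r)=\sup_{r'\in\mathcal{U}:r'_{1:k}=r_{1:k}}X(r')$ if some $r'\in\mathcal{U}$ has $r'_{1:k}=r_{1:k}$, and otherwise $\rho_k(X,r)=X([r_{1:k};0_{k+1:K}])$ (i.e. $\inf_{\epsilon>0}\operatorname{ess\,sup}$ of $X$ over $r'$ with $r'_{1:k}=r_{1:k}$, $\|r'_{k+1:K}\|_\infty\le\epsilon$). Let $\rho_{k,K}=\rho_k\circ\cdots\circ\rho_{K-1}$. Define $\mathcal{A}(\mathcal{U})=\{r\in\mathbb{R}^K:\forall k\in\{0,\dots,K-1\},\ \inf_{\zeta_k,\dots,\zeta_{K-1}}\rho_{k,K}(-\sum_{\ell=k}^{K-1}\zeta_\ell r_{\ell+1},r)\in(-\infty,0]\}$. Bounded conditional market risk: for each $k\in\{0,\dots,K-1\}$, $0\ge\inf_{\zeta_k,\dots,\zeta_{K-1}}\rho_{k,K}(-\sum_{\ell=k}^{K-1}\zeta_\ell r_{\ell+1})>-\infty$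 almost surely. *)

theory Defs
  imports "HOL-Probability.Probability"
begin

text \<open>Return vectors r in R^K are represented as functions nat => real with
  components r 1, ..., r K and r i = 0 for every other index i.\<close>

definition RK :: "nat \<Rightarrow> (nat \<Rightarrow> real) set" where
  "RK K = {r. \<forall>i. (i < 1 \<or> K < i) \<longrightarrow> r i = 0}"

definition same_prefix :: "nat \<Rightarrow> (nat \<Rightarrow> real) \<Rightarrow> (nat \<Rightarrow> real) \<Rightarrow> bool" where
  "same_prefix k r r' \<longleftrightarrow> (\<forall>i. 1 \<le> i \<and> i \<le> k \<longrightarrow> r i = r' i)"

definition trunc_vec :: "nat \<Rightarrow> (nat \<Rightarrow> real) \<Rightarrow> (nat \<Rightarrow> real)" where
  "trunc_vec k r = (\<lambda>i. if 1 \<le> i \<and> i \<le> k then r i else 0)"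

definition rho_step :: "(nat \<Rightarrow> real) set \<Rightarrow> nat \<Rightarrow> ((nat \<Rightarrow> real) \<Rightarrow> ereal)
    \<Rightarrow> (nat \<Rightarrow> real) \<Rightarrow> ereal" where
  "rho_step U k X r =
     (if \<exists>r'\<in>U. same_prefix k r' r
      then (SUP r'\<in>{r'\<in>U. same_prefix k r' r}. X r')
      else X (trunc_vec k r))"

primrec rho_seg :: "(nat \<Rightarrow> real) set \<Rightarrow> nat \<Rightarrow> nat \<Rightarrow> ((nat \<Rightarrow> real) \<Rightarrow> ereal)
    \<Rightarrow> (nat \<Rightarrow> real) \<Rightarrow> ereal" where
  "rho_seg U k 0 X = X"
| "rho_seg U k (Suc n) X = rho_step U k (rho_seg U (Suc k) n X)"

abbreviation rho_kK :: "(nat \<Rightarrow> real) set \<Rightarrow> nat \<Rightarrow> nat \<Rightarrow> ((nat \<Rightarrow> real) \<Rightarrow> ereal)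
    \<Rightarrow> (nat \<Rightarrow> real) \<Rightarrow> ereal" where
  "rho_kK U k K \<equiv> rho_seg U k (K - k)"

text \<open>Admissible investment strategies: zeta l is F_l-measurable, i.e. a Borel
  measurable function of r that depends only on r_{1:l}.\<close>
definition adapted_strategy :: "(nat \<Rightarrow> (nat \<Rightarrow> real) \<Rightarrow> real) \<Rightarrow> bool" where
  "adapted_strategy \<zeta> \<longleftrightarrow>
     (\<forall>l. \<zeta> l \<in> borel_measurable borel \<and>
          (\<forall>r r'. same_prefix l r r' \<longrightarrow> \<zeta> l r = \<zeta> l r'))"

definition trading_loss :: "nat \<Rightarrow> nat \<Rightarrow> (nat \<Rightarrow> (nat \<Rightarrow> real) \<Rightarrow> real)
    \<Rightarrow> (nat \<Rightarrow> real) \<Rightarrow> ereal" where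
  "trading_loss K k \<zeta> r = ereal (- (\<Sum>l\<in>{k..<K}. \<zeta> l r * r (Suc l)))"

definition cond_market_risk :: "(nat \<Rightarrow> real) set \<Rightarrow> nat \<Rightarrow> nat \<Rightarrow> (nat \<Rightarrow> real) \<Rightarrow> ereal" where
  "cond_market_risk U K k r =
     (INF \<zeta>\<in>{\<zeta>. adapted_strategy \<zeta>}. rho_kK U k K (trading_loss K k \<zeta>) r)"

definition admissible_set :: "nat \<Rightarrow> (nat \<Rightarrow> real) set \<Rightarrow> (nat \<Rightarrow> real) set" where
  "admissible_set K U = {r \<in> RK K. \<forall>k<K. cond_market_risk U K k r \<le> 0 \<and>
                                             - \<infinity> < cond_market_risk U K k r}"

definition bounded_cond_market_risk ::
    "nat \<Rightarrow> (nat \<Rightarrow> real) set \<Rightarrow> (nat \<Rightarrow> real) measure \<Rightarrow> bool" where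
  "bounded_cond_market_risk K U M \<longleftrightarrow>
     (\<forall>k<K. AE r in M. cond_market_risk U K k r \<le> 0 \<and> - \<infinity> < cond_market_risk U K k r)"

end

theory Submission
  imports Defs
begin

text \<open>The one-step measure \<open>\<rho>\<^sub>k\<close>, and hence the conditional market risk at stage \<open>k\<close>,
  depends on \<open>r\<close> only through the prefix \<open>r\<^sub>1, \<dots>, r\<^sub>k\<close>. If some \<open>u \<in> U\<close> shares this prefix, the risk at \<open>r\<close>
  equals the risk at \<open>u\<close>, which lies in \<open>(-\<infinity>, 0]\<close> because \<open>u\<close> is admissible. Otherwise
  \<open>\<rho>\<^sub>k\<close> evaluates at the truncated vector \<open>(r\<^sub>1, \<dots>, r\<^sub>k, 0, \<dots>, 0)\<close>, which no later \<open>\<rho>\<^sub>j\<close> moves and on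
  which every trading loss vanishes, so the risk is \<open>0\<close>. The bound therefore holds
  everywhere, not merely almost surely.\<close>

lemma same_prefix_sym: "same_prefix k r r' \<Longrightarrow> same_prefix k r' r"
  unfolding same_prefix_def by auto

lemma same_prefix_trans:
  "same_prefix k r r' \<Longrightarrow> same_prefix k r' r'' \<Longrightarrow> same_prefix k r r''"
  unfolding same_prefix_def by auto

lemma same_prefix_mono: "same_prefix j r r' \<Longrightarrow> k \<le> j \<Longrightarrow> same_prefix k r r'"
  unfolding same_prefix_def by auto

lemma same_prefix_trunc_vec: "same_prefix k (trunc_vec k r) r"
  unfolding same_prefix_def trunc_vec_def by auto

lemma trunc_vec_trunc_vec: "k \<le> j \<Longrightarrow> trunc_vec j (trunc_vec k r) = trunc_vec k r"
  unfolding trunc_vec_def by auto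

lemma trading_loss_trunc_vec: "trading_loss K k \<zeta> (trunc_vec k r) = 0"
  unfolding trading_loss_def trunc_vec_def by (simp add: zero_ereal_def)

lemma adapted_strategy_zero: "adapted_strategy (\<lambda>l r. 0)"
  unfolding adapted_strategy_def by simp

lemma rho_step_cong_prefix:
  assumes "same_prefix k r r'"
  shows "rho_step U k X r = rho_step U k X r'"
proof -
  have "same_prefix k u r \<longleftrightarrow> same_prefix k u r'" for u
    using assms same_prefix_sym same_prefix_trans by metis
  moreover have "trunc_vec k r = trunc_vec k r'"
    using assms unfolding trunc_vec_def same_prefix_def by auto
  ultimately show ?thesis
    unfolding rho_step_def by simp
qed

lemma rho_step_off_U:
  "\<not> (\<exists>u\<in>U. same_prefix k u r) \<Longrightarrow> rho_step U k X r = X (trunc_vec k r)"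
  unfolding rho_step_def by simp

lemma rho_seg_trunc_vec_off_U:
  assumes off_U: "\<not> (\<exists>u\<in>U. same_prefix k u r)" and "k \<le> j"
  shows "rho_seg U j n X (trunc_vec k r) = X (trunc_vec k r)"
  using \<open>k \<le> j\<close>
proof (induction n arbitrary: j)
  case 0
  then show ?case by simp
next
  case (Suc n)
  have "\<not> (\<exists>u\<in>U. same_prefix j u (trunc_vec k r))"
  proof
    assume "\<exists>u\<in>U. same_prefix j u (trunc_vec k r)"
    then obtain u where "u \<in> U" "same_prefix k u (trunc_vec k r)"
      using Suc.prems same_prefix_mono by blast
    then show False
      using off_U same_prefix_trans[OF _ same_prefix_trunc_vec] by blast
  qed
  then show ?case
    using Suc trunc_vec_trunc_vec by (simp add: rho_step_off_U)
qed

lemma cond_market_risk_cong_prefix: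
  assumes "k < K" "same_prefix k r r'"
  shows "cond_market_risk U K k r = cond_market_risk U K k r'"
proof -
  obtain n where "K - k = Suc n"
    using \<open>k < K\<close> by (metis Suc_diff_Suc)
  then show ?thesis
    unfolding cond_market_risk_def using rho_step_cong_prefix[OF assms(2)] by simp
qed

lemma cond_market_risk_off_U:
  assumes "k < K" and off_U: "\<not> (\<exists>u\<in>U. same_prefix k u r)"
  shows "cond_market_risk U K k r = 0"
proof -
  obtain n where n: "K - k = Suc n"
    using \<open>k < K\<close> by (metis Suc_diff_Suc)
  have "rho_kK U k K (trading_loss K k \<zeta>) r = 0" for \<zeta>
    using rho_seg_trunc_vec_off_U[OF off_U, of "Suc k"]
    by (simp add: n rho_step_off_U[OF off_U] trading_loss_trunc_vec)
  then have "cond_market_risk U K k r = (INF \<zeta>\<in>{\<zeta>. adapted_strategy \<zeta>}. 0)"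
    unfolding cond_market_risk_def by simp
  also have "\<dots> = 0"
    using adapted_strategy_zero by (intro INF_const) blast
  finally show ?thesis .
qed

lemma cond_market_risk_bounded:
  assumes "U \<subseteq> admissible_set K U" "k < K"
  shows "cond_market_risk U K k r \<le> 0 \<and> - \<infinity> < cond_market_risk U K k r"
proof (cases "\<exists>u\<in>U. same_prefix k u r")
  case True
  then obtain u where "u \<in> U" "same_prefix k u r"
    by blast
  then have "cond_market_risk U K k r = cond_market_risk U K k u"
       and "u \<in> admissible_set K U"
    using assms cond_market_risk_cong_prefix[OF \<open>k < K\<close> same_prefix_sym] by auto
  then show ?thesis
    using \<open>k < K\<close> unfolding admissible_set_def by auto
next
  case False
  then show ?thesis
    using cond_market_risk_off_U[OF \<open>k < K\<close>] by simp
qed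

theorem lemma7:
  fixes K :: nat and U :: "(nat \<Rightarrow> real) set" and M :: "(nat \<Rightarrow> real) measure"
  assumes "prob_space M"
    and "space M \<subseteq> RK K"
    and "U \<subseteq> RK K"
    and "U \<subseteq> admissible_set K U"
  shows "bounded_cond_market_risk K U M"
  unfolding bounded_cond_market_risk_def
  using cond_market_risk_bounded[OF assms(4)] by (intro allI impI AE_I2) auto

end
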